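(* For every $n\ge0$, the maps $\varphi_L,\varphi_R\colon\mathcal{T}_n\to\mathcal{P}_n(1212)$ are bijections.
   Context: $\mathcal{T}_n$ is the set of binary trees on $n$ vertices labeled $1,\dots,n$ by the search tree property (vertices in the left subtree of $i$ are smaller than $i$, those in the right subtree larger). A left branch is a maximal sequence of vertices $v,c_L(v),c_L^2(v),\dots$ connected by left-child edges; right branches analogously. For $T\in\mathcal{T}_n$, $\varphi_L(T)$ is the set partition of $[n]$ whose blocks are the vertex sets of the maximal left branches of $T$ (i.e. $i\sim_L j$ iff $i,j$ lie on the same left branch), and $\varphi_R(T)$ is the partition into vertex sets of maximal right branches. Set partitions of $[n]$ are identified with restricted growth strings (RGS) $x_1\cdots x_n$: order blocks by smallest element and let $x_i=j$ if $i$ is in the $j$-th block; $\mathcal{P}_n$ is the set of all RGS of length $n$. A string $x$ contains a pattern string $\tau=\tau_1\cdots\tau_m$ if there are indices $i_1<\dots<i_m$ with $x_{i_a}<x_{i_b}\iff\tau_a<\tau_b$ and $x_{i_a}=x_{i_b}\iff\tau_a=\tau_b$; $\mathcal{P}_n(1212)$ is the set of RGS avoiding $1212$ (the non-crossing set partitions). *)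

theory Defs
  imports Main "HOL-Library.Tree"
begin

definition trees :: "nat \<Rightarrow> nat tree set" where
  "trees n = {t. bst t \<and> set_tree t = {1..n}}"

fun left_edges :: "'a tree \<Rightarrow> ('a \<times> 'a) set" where
  "left_edges Leaf = {}"
| "left_edges (Node l a r) =
     (case l of Leaf \<Rightarrow> {} | Node _ b _ \<Rightarrow> {(a, b)}) \<union> left_edges l \<union> left_edges r"

fun right_edges :: "'a tree \<Rightarrow> ('a \<times> 'a) set" where
  "right_edges Leaf = {}"
| "right_edges (Node l a r) =
     (case r of Leaf \<Rightarrow> {} | Node _ b _ \<Rightarrow> {(a, b)}) \<union> right_edges l \<union> right_edges r"

definition same_branch :: "('a \<times> 'a) set \<Rightarrow> 'a \<Rightarrow> 'a \<Rightarrow> bool" where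
  "same_branch E i j \<longleftrightarrow> (i, j) \<in> (E \<union> E\<inverse>)\<^sup>*"

text \<open>Restricted growth string (1-based values, list position k stands for element k+1)
  of a partition of {1..n} given by an equivalence predicate R: blocks are ordered by
  their smallest element, x_i = j iff i lies in the j-th block.\<close>
definition block :: "nat \<Rightarrow> (nat \<Rightarrow> nat \<Rightarrow> bool) \<Rightarrow> nat \<Rightarrow> nat set" where
  "block n R i = {j \<in> {1..n}. R i j}"

definition rgs_of :: "nat \<Rightarrow> (nat \<Rightarrow> nat \<Rightarrow> bool) \<Rightarrow> nat list" where
  "rgs_of n R = map (\<lambda>i. card {m. m \<in> Min ` (block n R ` {1..n}) \<and> m \<le> Min (block n R i)})
                  [1..<n+1]"

definition phiL :: "nat \<Rightarrow> nat tree \<Rightarrow> nat list" where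
  "phiL n t = rgs_of n (same_branch (left_edges t))"

definition phiR :: "nat \<Rightarrow> nat tree \<Rightarrow> nat list" where
  "phiR n t = rgs_of n (same_branch (right_edges t))"

definition is_rgs :: "nat list \<Rightarrow> bool" where
  "is_rgs x \<longleftrightarrow> (\<forall>i < length x. 1 \<le> x ! i \<and> x ! i \<le> Suc (Max (insert 0 (set (take i x)))))"

definition RGS :: "nat \<Rightarrow> nat list set" where
  "RGS n = {x. length x = n \<and> is_rgs x}"

definition contains :: "nat list \<Rightarrow> nat list \<Rightarrow> bool" where
  "contains x \<tau> \<longleftrightarrow> (\<exists>f :: nat \<Rightarrow> nat.
      (\<forall>a b. a < b \<and> b < length \<tau> \<longrightarrow> f a < f b) \<and>
      (\<forall>a < length \<tau>. f a < length x) \<and>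
      (\<forall>a < length \<tau>. \<forall>b < length \<tau>.
          (x ! f a < x ! f b \<longleftrightarrow> \<tau> ! a < \<tau> ! b) \<and> (x ! f a = x ! f b \<longleftrightarrow> \<tau> ! a = \<tau> ! b)))"

definition RGS_avoid :: "nat \<Rightarrow> nat list \<Rightarrow> nat list set" where
  "RGS_avoid n \<tau> = {x \<in> RGS n. \<not> contains x \<tau>}"

end

(*
  In a search tree \<langle>l, a, r\<rangle> the left branch through the root runs from a down to the least
  label, and every other left branch lies inside l or inside r. So the left branches form a
  noncrossing partition, obtained from those of l and r by adding a to the block of the least
  label of l. Conversely, in a noncrossing partition of a finite set S the largest element v of
  the block of min S is the root: every other block lies entirely below or entirely above v.
  Hence left branches give a bijection from search trees on S to noncrossing partitions of S.
  Right branches are the left branches of the mirrored tree for the reversed order, so they give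
  one as well. Finally, restricted growth strings encode partitions bijectively, and a crossing
  a < b < c < d with x_a = x_c, x_b = x_d, x_a \<noteq> x_b is a 1212 pattern, after replacing a by the
  first occurrence of x_b when x_b < x_a.
*)

theory Submission
  imports Defs "HOL-Library.Dual_Ordered_Lattice"
begin

instance dual :: (linorder) linorder
  by standard (simp add: dual_less_eq_iff linear)

definition noncrossing :: "('a::linorder \<times> 'a) set \<Rightarrow> bool" where
  "noncrossing P \<longleftrightarrow>
     (\<forall>a b c d. a < b \<longrightarrow> b < c \<longrightarrow> c < d \<longrightarrow> (a, c) \<in> P \<longrightarrow> (b, d) \<in> P \<longrightarrow> (a, b) \<in> P)"

definition nc_partitions :: "'a::linorder set \<Rightarrow> ('a \<times> 'a) set set" where
  "nc_partitions S = {P. equiv S P \<and> noncrossing P}"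

lemma equiv_Un_disjoint:
  assumes R: "equiv A R" and S: "equiv B S" and disj: "A \<inter> B = {}"
  shows "equiv (A \<union> B) (R \<union> S)"
proof (rule equivI)
  have "R \<subseteq> A \<times> A" "S \<subseteq> B \<times> B"
    using R S by (auto elim: equivE)
  with disj show "R \<union> S \<subseteq> (A \<union> B) \<times> (A \<union> B)" "trans (R \<union> S)"
    using R S unfolding trans_def by (auto elim!: equivE dest: transD)
  show "refl_on (A \<union> B) (R \<union> S)" "sym (R \<union> S)"
    using R S by (auto elim!: equivE simp: refl_on_def sym_def)
qed

lemma equiv_Un_square:
  assumes R: "equiv A R" and closed: "R `` K \<subseteq> K"
  shows "equiv (A \<union> K) (R \<union> K \<times> K)"
proof -
  from R have sub: "R \<subseteq> A \<times> A" and refl: "refl_on A R" and "sym R" "trans R"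
    by (blast elim: equivE)+
  have into_K: "x \<in> K" if "(x, y) \<in> R" "y \<in> K" for x y
    using closed \<open>sym R\<close> that by (blast dest: symD)
  show ?thesis
  proof (rule equivI)
    show "R \<union> K \<times> K \<subseteq> (A \<union> K) \<times> (A \<union> K)" using sub by blast
    show "refl_on (A \<union> K) (R \<union> K \<times> K)" using refl by (auto simp: refl_on_def)
    show "sym (R \<union> K \<times> K)" using \<open>sym R\<close> by (auto simp: sym_def)
    show "trans (R \<union> K \<times> K)"
      using \<open>trans R\<close> closed into_K unfolding trans_def by blast
  qed
qed

lemma equiv_restrict:
  assumes "equiv A R" "B \<subseteq> A"
  shows "equiv B (R \<inter> B \<times> B)"
proof -
  from assms(1) have "refl_on A R" "sym R" "trans R"
    by (blast elim: equivE)+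
  with assms(2) show ?thesis
    unfolding equiv_def refl_on_def sym_def trans_def by blast
qed

lemma nc_partitions_restrict:
  assumes "P \<in> nc_partitions S" "T \<subseteq> S"
  shows "P \<inter> T \<times> T \<in> nc_partitions T"
  using assms equiv_restrict unfolding nc_partitions_def noncrossing_def by blast

lemma equiv_map_prod_image:
  assumes "equiv A R" and g: "inj g"
  shows "equiv (g ` A) (map_prod g g ` R)"
proof -
  from assms(1) have sub: "R \<subseteq> A \<times> A" and refl: "refl_on A R" and "sym R" "trans R"
    by (blast elim: equivE)+
  show ?thesis
  proof (rule equivI)
    show "map_prod g g ` R \<subseteq> g ` A \<times> g ` A" using sub by auto
    show "refl_on (g ` A) (map_prod g g ` R)" using refl by (auto simp: refl_on_def)
    show "sym (map_prod g g ` R)" using \<open>sym R\<close> by (auto simp: sym_def)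
    show "trans (map_prod g g ` R)"
    proof (rule transI)
      fix x y z assume "(x, y) \<in> map_prod g g ` R" "(y, z) \<in> map_prod g g ` R"
      then obtain a b b' c where "(a, b) \<in> R" "(b', c) \<in> R" "x = g a" "y = g b" "y = g b'" "z = g c"
        by auto
      moreover from this have "b = b'"
        using g by (simp add: inj_eq)
      ultimately have "(a, c) \<in> R" "x = g a" "z = g c"
        using \<open>trans R\<close> by (blast dest: transD)+
      then show "(x, z) \<in> map_prod g g ` R"
        by auto
    qed
  qed
qed

lemma nc_partitions_map_prod_antimono:
  assumes P: "P \<in> nc_partitions S" and "inj g" and antimono: "\<And>x y. g x < g y \<longleftrightarrow> y < x"
  shows "map_prod g g ` P \<in> nc_partitions (g ` S)"
proof -
  have eq: "equiv S P" and nc: "noncrossing P"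
    using P by (simp_all add: nc_partitions_def)
  have "noncrossing (map_prod g g ` P)"
    unfolding noncrossing_def
  proof (intro allI impI)
    fix a b c d
    assume ord: "a < b" "b < c" "c < d" and "(a, c) \<in> map_prod g g ` P" "(b, d) \<in> map_prod g g ` P"
    then obtain a' b' c' d' where ac: "(a', c') \<in> P" and bd: "(b', d') \<in> P"
      and ab: "a = g a'" "b = g b'" "c = g c'" "d = g d'"
      by auto
    then have "d' < c'" "c' < b'" "b' < a'"
      using ord antimono by simp_all
    moreover have "(c', a') \<in> P" "(d', b') \<in> P"
      using ac bd eq by (blast elim: equivE dest: symD)+
    ultimately have "(d', c') \<in> P"
      using nc unfolding noncrossing_def by blast
    then have "(a', b') \<in> P"
      using ac bd eq by (blast elim: equivE dest: symD transD)
    then show "(a, b) \<in> map_prod g g ` P"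
      using ab by auto
  qed
  with equiv_map_prod_image[OF eq \<open>inj g\<close>] show ?thesis
    by (simp add: nc_partitions_def)
qed

text \<open>For partitions \<open>P\<close> of \<open>L\<close> and \<open>Q\<close> of \<open>R\<close> with \<open>L < v < R\<close>, the root \<open>v\<close> joins the block
  of \<open>Min L\<close>; if \<open>L = {}\<close> that block is empty, whatever \<open>Min {}\<close> is.\<close>

definition join_partitions :: "'a::linorder \<Rightarrow> ('a \<times> 'a) set \<Rightarrow> ('a \<times> 'a) set \<Rightarrow> ('a \<times> 'a) set" where
  "join_partitions v P Q =
     (let K = insert v (P `` {Min (Domain P)}) in P \<union> Q \<union> K \<times> K)"

context
  fixes v :: "'a::linorder" and L R :: "'a set" and P Q :: "('a \<times> 'a) set"
  assumes P: "P \<in> nc_partitions L" and Q: "Q \<in> nc_partitions R"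
    and finite: "finite L" "finite R"
    and below: "\<forall>x\<in>L. x < v" and above: "\<forall>x\<in>R. v < x"
begin

private abbreviation (input) "C \<equiv> P `` {Min L}"
private abbreviation (input) "K \<equiv> insert v C"

private lemma P_equiv: "equiv L P" and Q_equiv: "equiv R Q"
  using P Q by (simp_all add: nc_partitions_def)

private lemma P_sub: "P \<subseteq> L \<times> L" and Q_sub: "Q \<subseteq> R \<times> R"
  using P_equiv Q_equiv by (simp_all add: equiv_type)

private lemma C_sub: "C \<subseteq> L"
  using P_sub by blast

private lemma C_square: "C \<times> C \<subseteq> P"
  using P_equiv by (blast elim: equivE dest: symD transD)

private lemma Min_in_C: "x \<in> L \<Longrightarrow> Min L \<in> C \<and> Min L \<le> x"
proof -
  assume "x \<in> L"
  then have "Min L \<in> L" "Min L \<le> x"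
    using finite(1) by (auto intro: Min_in)
  then show ?thesis
    using P_equiv unfolding equiv_def refl_on_def by blast
qed

private lemma v_notin: "v \<notin> L" "v \<notin> R" and disjoint: "L \<inter> R = {}"
  using below above by fastforce+

lemma join_partitions_eq: "join_partitions v P Q = P \<union> Q \<union> K \<times> K"
proof -
  have "Domain P = L"
    using P_equiv unfolding equiv_def refl_on_def by blast
  then show ?thesis
    by (simp add: join_partitions_def)
qed

lemma join_restrict_below: "join_partitions v P Q \<inter> L \<times> L = P"
  using P_sub Q_sub C_square C_sub v_notin disjoint unfolding join_partitions_eq by blast

lemma join_restrict_above: "join_partitions v P Q \<inter> R \<times> R = Q"
  using P_sub Q_sub C_sub v_notin disjoint unfolding join_partitions_eq by blast

private lemma K_sub: "K \<subseteq> insert v L"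
  using C_sub by blast

private lemma C_below:
  assumes "a \<in> L" "b \<in> C" "a < b" "b < c" "(a, c) \<in> P"
  shows "a \<in> C"
proof -
  obtain "Min L \<in> C" "Min L \<le> a"
    using Min_in_C assms(1) by blast
  moreover have "(Min L, a) \<in> P" if "Min L < a"
  proof -
    have "(Min L, b) \<in> P"
      using C_square \<open>Min L \<in> C\<close> assms(2) by blast
    then show ?thesis
      using P that assms(3-5) unfolding nc_partitions_def noncrossing_def by blast
  qed
  ultimately show ?thesis
    by (cases "Min L = a") auto
qed

private lemma join_cases:
  assumes "(x, y) \<in> P \<union> Q \<union> K \<times> K"
  shows "x \<in> L \<Longrightarrow> (x, y) \<in> P \<or> (x \<in> C \<and> y = v)"
    and "x \<in> R \<Longrightarrow> (x, y) \<in> Q"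
    and "x = v \<Longrightarrow> y \<in> insert v L"
    and "x \<in> L \<or> x \<in> R \<or> x = v"
  using assms C_square C_sub P_sub Q_sub v_notin disjoint by blast+

private lemma join_noncrossing: "noncrossing (P \<union> Q \<union> K \<times> K)"
  unfolding noncrossing_def
proof (intro allI impI)
  fix a b c d
  assume ord: "a < b" "b < c" "c < d"
    and ac: "(a, c) \<in> P \<union> Q \<union> K \<times> K" and bd: "(b, d) \<in> P \<union> Q \<union> K \<times> K"
  have ncP: "noncrossing P" and ncQ: "noncrossing Q"
    using P Q by (simp_all add: nc_partitions_def)
  consider "a \<in> R" | "a = v" | "a \<in> L"
    using join_cases(4)[OF ac] by blast
  then show "(a, b) \<in> P \<union> Q \<union> K \<times> K"
  proof cases
    case 1
    then have "b \<in> R"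
      using join_cases(4)[OF bd] ord below above by fastforce
    then show ?thesis
      using join_cases(2)[OF ac 1] join_cases(2)[OF bd] ncQ ord unfolding noncrossing_def by blast
  next
    case 2
    then show ?thesis
      using join_cases(3)[OF ac] ord below by fastforce
  next
    case 3
    have "b \<in> L" if "b < v"
      using join_cases(4)[OF bd] that above by fastforce
    moreover have "d \<in> L" if "(b, d) \<in> P"
      using that P_sub by blast
    ultimately have "(a, c) \<in> P"
      using join_cases(1)[OF ac 3] join_cases(1)[OF bd] ord below by fastforce
    then have "b \<in> L"
      using \<open>b < v \<Longrightarrow> b \<in> L\<close> ord P_sub below by fastforce
    then consider "(b, d) \<in> P" | "b \<in> C"
      using join_cases(1)[OF bd] by blast
    then show ?thesis
    proof cases
      case 1
      then show ?thesis
        using \<open>(a, c) \<in> P\<close> ncP ord unfolding noncrossing_def by blast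
    next
      case 2
      then show ?thesis
        using C_below[OF 3 2] ord \<open>(a, c) \<in> P\<close> by blast
    qed
  qed
qed

lemma join_in_nc_partitions: "join_partitions v P Q \<in> nc_partitions (insert v (L \<union> R))"
proof -
  have "P `` C \<subseteq> C"
    using P_equiv by (blast elim: equivE dest: transD)
  moreover have "P `` {v} = {}" "Q `` K = {}"
    using P_sub Q_sub K_sub v_notin disjoint by blast+
  ultimately have "(P \<union> Q) `` K \<subseteq> K"
    by blast
  with equiv_Un_disjoint[OF P_equiv Q_equiv disjoint]
  have "equiv (L \<union> R \<union> K) (P \<union> Q \<union> K \<times> K)"
    by (rule equiv_Un_square)
  moreover have "L \<union> R \<union> K = insert v (L \<union> R)"
    using C_sub by blast
  ultimately show ?thesis
    using join_noncrossing by (simp add: nc_partitions_def join_partitions_eq)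
qed

end

lemma noncrossing_block_side:
  assumes "equiv S P" "noncrossing P" and m: "\<forall>z\<in>S. m \<le> z" "(m, v) \<in> P"
    and xy: "(x, y) \<in> P" "(m, x) \<notin> P"
  shows "x < v \<longleftrightarrow> y < v"
proof -
  have "(y, x) \<in> P" "(m, y) \<notin> P" "x \<in> S" "y \<in> S"
    using assms(1) xy by (blast elim: equivE dest: symD transD)+
  then have "m < x" "m < y" "x \<noteq> v" "y \<noteq> v"
    using m xy by (auto simp: order.order_iff_strict)
  then show ?thesis
    using assms(2) m(2) xy \<open>(y, x) \<in> P\<close> \<open>(m, y) \<notin> P\<close> unfolding noncrossing_def
    by (metis linorder_neqE)
qed

context
  fixes P :: "('a::linorder \<times> 'a) set" and S :: "'a set"
  assumes P: "P \<in> nc_partitions S" and finite: "finite S" and nonempty: "S \<noteq> {}"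
begin

private abbreviation (input) "m \<equiv> Min S"
private abbreviation (input) "B \<equiv> P `` {m}"
private abbreviation (input) "v \<equiv> Max B"
private abbreviation (input) "S\<^sub>1 \<equiv> {x \<in> S. x < v}"
private abbreviation (input) "S\<^sub>2 \<equiv> {x \<in> S. v < x}"

private lemma equiv_S: "equiv S P"
  using P by (simp add: nc_partitions_def)

private lemma Min_S: "m \<in> S" "\<forall>z\<in>S. m \<le> z" "m \<in> B"
proof -
  show "m \<in> S" "\<forall>z\<in>S. m \<le> z"
    using finite nonempty by simp_all
  then show "m \<in> B"
    using equiv_S by (blast elim: equivE dest: refl_onD)
qed

private lemma class_Min: "B \<subseteq> S" "finite B"
  using equiv_S finite by (auto dest: equiv_type intro: finite_subset)

private lemma Max_class_Min: "v \<in> B" "\<forall>z\<in>B. z \<le> v"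
proof -
  have "B \<noteq> {}"
    using Min_S(3) by blast
  then show "v \<in> B"
    using class_Min(2) by (rule Max_in[rotated])
  show "\<forall>z\<in>B. z \<le> v"
    using Max_ge[OF class_Min(2)] by blast
qed

lemma Max_class_Min_in: "Max (P `` {Min S}) \<in> S"
  using Max_class_Min(1) class_Min(1) by blast

private lemma class_Min_eq: "insert v ((P \<inter> S\<^sub>1 \<times> S\<^sub>1) `` {Min S\<^sub>1}) = B"
proof (cases "S\<^sub>1 = {}")
  case True
  have "m \<le> v" "\<not> m < v"
    using Min_S(1,3) Max_class_Min(2) True by blast+
  then have "{v} = B"
    using class_Min(1) Min_S(2) Max_class_Min by (auto intro: antisym)
  moreover have "(P \<inter> S\<^sub>1 \<times> S\<^sub>1) `` {Min S\<^sub>1} = {}"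
    by (simp only: True) simp
  ultimately show ?thesis
    by (simp only:)
next
  case False
  then have "m < v"
    using Min_S(2) by force
  then have "Min S\<^sub>1 = m"
    using finite Min_S(1,2) by (intro Min_eqI) auto
  moreover have "(P \<inter> S\<^sub>1 \<times> S\<^sub>1) `` {m} = B - {v}"
    using \<open>m < v\<close> Min_S(1) class_Min(1) Max_class_Min(2) by force
  ultimately show ?thesis
    using insert_Diff[OF Max_class_Min(1)] by (simp only:)
qed

private lemma outside_class_Min:
  assumes "(x, y) \<in> P" "(x, y) \<notin> B \<times> B"
  shows "(x, y) \<in> P \<inter> S\<^sub>1 \<times> S\<^sub>1 \<union> P \<inter> S\<^sub>2 \<times> S\<^sub>2"
proof -
  from assms have "(m, x) \<notin> P"
    using equiv_S by (blast elim: equivE dest: symD transD)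
  then have "x < v \<longleftrightarrow> y < v" "y < v \<longleftrightarrow> x < v" "x \<noteq> v" "y \<noteq> v"
    using noncrossing_block_side[OF equiv_S _ Min_S(2), of v] P Max_class_Min(1) assms(1) equiv_S
    unfolding nc_partitions_def by (blast elim: equivE dest: symD transD)+
  moreover have "x \<in> S" "y \<in> S"
    using assms(1) equiv_S by (auto dest: equiv_type)
  ultimately show ?thesis
    using assms(1) by auto
qed

lemma nc_partition_eq_join:
  "P = join_partitions v (P \<inter> S\<^sub>1 \<times> S\<^sub>1) (P \<inter> S\<^sub>2 \<times> S\<^sub>2)"
proof -
  have "P \<inter> S\<^sub>1 \<times> S\<^sub>1 \<in> nc_partitions S\<^sub>1" "P \<inter> S\<^sub>2 \<times> S\<^sub>2 \<in> nc_partitions S\<^sub>2"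
    "finite S\<^sub>1" "finite S\<^sub>2" "\<forall>x\<in>S\<^sub>1. x < v" "\<forall>x\<in>S\<^sub>2. v < x"
    using P finite by (auto intro: nc_partitions_restrict)
  note join_eq = join_partitions_eq[OF this]
  have "join_partitions v (P \<inter> S\<^sub>1 \<times> S\<^sub>1) (P \<inter> S\<^sub>2 \<times> S\<^sub>2) = P \<inter> S\<^sub>1 \<times> S\<^sub>1 \<union> P \<inter> S\<^sub>2 \<times> S\<^sub>2 \<union> B \<times> B"
    by (simp only: join_eq class_Min_eq)
  moreover have "B \<times> B \<subseteq> P"
    using equiv_S by (blast elim: equivE dest: symD transD)
  moreover have "P \<subseteq> P \<inter> S\<^sub>1 \<times> S\<^sub>1 \<union> P \<inter> S\<^sub>2 \<times> S\<^sub>2 \<union> B \<times> B"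
    using outside_class_Min by fast
  ultimately show ?thesis
    by blast
qed

end

fun left_spine :: "'a tree \<Rightarrow> 'a set" where
  "left_spine \<langle>\<rangle> = {}"
| "left_spine \<langle>l, a, r\<rangle> = insert a (left_spine l)"

fun left_partition :: "'a tree \<Rightarrow> ('a \<times> 'a) set" where
  "left_partition \<langle>\<rangle> = {}"
| "left_partition \<langle>l, a, r\<rangle> =
     left_partition l \<union> left_partition r \<union> left_spine \<langle>l, a, r\<rangle> \<times> left_spine \<langle>l, a, r\<rangle>"

lemma left_spine_subset: "left_spine t \<subseteq> set_tree t"
  by (induction t) auto

lemma left_partition_subset: "left_partition t \<subseteq> set_tree t \<times> set_tree t"
proof (induction t)
  case (Node l a r)
  then show ?case
    using left_spine_subset[of l] by auto
qed simp

lemma Domain_left_partition: "Domain (left_partition t) = set_tree t"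
proof (induction t)
  case (Node l a r)
  then show ?case
    using left_spine_subset[of l] by auto
qed simp

lemma Min_in_left_spine: "bst t \<Longrightarrow> t \<noteq> \<langle>\<rangle> \<Longrightarrow> Min (set_tree t) \<in> left_spine t"
proof (induction t)
  case (Node l a r)
  show ?case
  proof (cases "l = \<langle>\<rangle>")
    case True
    then have "Min (set_tree \<langle>l, a, r\<rangle>) = a"
      using Node.prems by (intro Min_eqI) (auto simp: less_imp_le)
    then show ?thesis by simp
  next
    case False
    then have "Min (set_tree l) \<in> set_tree l"
      by simp
    then have "Min (set_tree \<langle>l, a, r\<rangle>) = Min (set_tree l)"
      using Node.prems by (intro Min_eqI) (auto intro: less_imp_le less_trans)
    then show ?thesis
      using Node False by simp
  qed
qed simp

lemma left_spine_closed: "bst t \<Longrightarrow> left_partition t `` left_spine t \<subseteq> left_spine t"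
proof (induction t)
  case (Node l a r)
  have "a \<notin> set_tree l" "left_spine \<langle>l, a, r\<rangle> \<inter> set_tree r = {}"
    using Node.prems left_spine_subset[of l] by fastforce+
  then show ?case
    using Node left_partition_subset[of l] left_partition_subset[of r] by auto
qed simp

lemma left_partition_class_Min:
  "bst t \<Longrightarrow> left_partition t `` {Min (set_tree t)} = left_spine t"
proof (cases t)
  case (Node l a r)
  assume "bst t"
  then have "Min (set_tree t) \<in> left_spine t"
    using Node Min_in_left_spine by blast
  moreover have "left_spine t \<times> left_spine t \<subseteq> left_partition t"
    using Node by auto
  ultimately show ?thesis
    using left_spine_closed[OF \<open>bst t\<close>] by blast
qed simp

lemma left_partition_Node:
  assumes "bst \<langle>l, a, r\<rangle>"
  shows "left_partition \<langle>l, a, r\<rangle> = join_partitions a (left_partition l) (left_partition r)"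
  using assms left_partition_class_Min[of l]
  by (simp add: join_partitions_def Domain_left_partition Let_def)

lemma left_partition_in_nc_partitions: "bst t \<Longrightarrow> left_partition t \<in> nc_partitions (set_tree t)"
proof (induction t)
  case Leaf
  then show ?case
    by (simp add: nc_partitions_def noncrossing_def equiv_def refl_on_def sym_def trans_def)
next
  case (Node l a r)
  then have "join_partitions a (left_partition l) (left_partition r)
      \<in> nc_partitions (insert a (set_tree l \<union> set_tree r))"
    by (intro join_in_nc_partitions) auto
  then show ?case
    by (simp only: left_partition_Node[OF Node.prems]) simp
qed

lemma Max_left_spine: "bst \<langle>l, a, r\<rangle> \<Longrightarrow> Max (left_spine \<langle>l, a, r\<rangle>) = a"
  using left_spine_subset[of l] by (intro Max_eqI) (auto intro: finite_subset less_imp_le)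

lemma left_partition_restrict:
  assumes "bst \<langle>l, a, r\<rangle>"
  shows "left_partition \<langle>l, a, r\<rangle> \<inter> set_tree l \<times> set_tree l = left_partition l"
    and "left_partition \<langle>l, a, r\<rangle> \<inter> set_tree r \<times> set_tree r = left_partition r"
proof -
  have "left_partition l \<in> nc_partitions (set_tree l)" "left_partition r \<in> nc_partitions (set_tree r)"
    "finite (set_tree l)" "finite (set_tree r)" "\<forall>x\<in>set_tree l. x < a" "\<forall>x\<in>set_tree r. a < x"
    using assms by (auto intro: left_partition_in_nc_partitions)
  note facts = this
  show "left_partition \<langle>l, a, r\<rangle> \<inter> set_tree l \<times> set_tree l = left_partition l"
    using join_restrict_below[OF facts] by (simp only: left_partition_Node[OF assms])
  show "left_partition \<langle>l, a, r\<rangle> \<inter> set_tree r \<times> set_tree r = left_partition r"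
    using join_restrict_above[OF facts] by (simp only: left_partition_Node[OF assms])
qed

lemma set_tree_subtrees:
  assumes "bst \<langle>l, a, r\<rangle>"
  shows "set_tree l = {x \<in> set_tree \<langle>l, a, r\<rangle>. x < a}" "set_tree r = {x \<in> set_tree \<langle>l, a, r\<rangle>. a < x}"
  using assms by (auto dest: less_asym)

lemma left_partition_inject:
  "bst t \<Longrightarrow> bst t' \<Longrightarrow> set_tree t = set_tree t' \<Longrightarrow> left_partition t = left_partition t' \<Longrightarrow> t = t'"
proof (induction t arbitrary: t')
  case (Node l a r)
  then obtain l' a' r' where t': "t' = \<langle>l', a', r'\<rangle>"
    by (cases t') auto
  have "a = a'"
    using Max_left_spine left_partition_class_Min Node.prems t' by metis
  then have "set_tree l = set_tree l'" "set_tree r = set_tree r'"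
    using set_tree_subtrees Node.prems t' by metis+
  moreover from this have "left_partition l = left_partition l'" "left_partition r = left_partition r'"
    using left_partition_restrict Node.prems t' by metis+
  ultimately show ?case
    using Node t' \<open>a = a'\<close> by simp
qed simp

lemma left_partition_surj:
  "finite S \<Longrightarrow> P \<in> nc_partitions S \<Longrightarrow> \<exists>t. bst t \<and> set_tree t = S \<and> left_partition t = P"
proof (induction "card S" arbitrary: S P rule: less_induct)
  case less
  show ?case
  proof (cases "S = {}")
    case True
    then show ?thesis
      using less.prems by (intro exI[of _ Leaf]) (auto simp: nc_partitions_def dest: equiv_type)
  next
    case False
    define v where "v = Max (P `` {Min S})"
    define S\<^sub>1 S\<^sub>2 where "S\<^sub>1 = {x \<in> S. x < v}" and "S\<^sub>2 = {x \<in> S. v < x}"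
    have decomp: "v \<in> S" "P = join_partitions v (P \<inter> S\<^sub>1 \<times> S\<^sub>1) (P \<inter> S\<^sub>2 \<times> S\<^sub>2)"
      using Max_class_Min_in nc_partition_eq_join less.prems False by (simp_all add: v_def S\<^sub>1_def S\<^sub>2_def)
    have "card S\<^sub>1 < card S" "card S\<^sub>2 < card S"
      using less.prems(1) decomp(1) by (auto simp: S\<^sub>1_def S\<^sub>2_def intro!: psubset_card_mono)
    moreover have "finite S\<^sub>1" "finite S\<^sub>2"
      using less.prems(1) by (simp_all add: S\<^sub>1_def S\<^sub>2_def)
    moreover have "P \<inter> S\<^sub>1 \<times> S\<^sub>1 \<in> nc_partitions S\<^sub>1" "P \<inter> S\<^sub>2 \<times> S\<^sub>2 \<in> nc_partitions S\<^sub>2"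
      using less.prems(2) by (auto intro: nc_partitions_restrict simp: S\<^sub>1_def S\<^sub>2_def)
    ultimately obtain l r where
      l: "bst l" "set_tree l = S\<^sub>1" "left_partition l = P \<inter> S\<^sub>1 \<times> S\<^sub>1" and
      r: "bst r" "set_tree r = S\<^sub>2" "left_partition r = P \<inter> S\<^sub>2 \<times> S\<^sub>2"
      using less.hyps by meson
    have t: "bst \<langle>l, v, r\<rangle>"
      using l r by (simp add: S\<^sub>1_def S\<^sub>2_def)
    have "left_partition \<langle>l, v, r\<rangle> = join_partitions v (left_partition l) (left_partition r)"
      using t by (rule left_partition_Node)
    also have "\<dots> = join_partitions v (P \<inter> S\<^sub>1 \<times> S\<^sub>1) (P \<inter> S\<^sub>2 \<times> S\<^sub>2)"
      by (simp only: l(3) r(3))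
    also have "\<dots> = P"
      by (rule decomp(2)[symmetric])
    moreover have "set_tree \<langle>l, v, r\<rangle> = S"
      using l r decomp(1) by (auto simp: S\<^sub>1_def S\<^sub>2_def)
    ultimately show ?thesis
      using t by blast
  qed
qed

lemma bij_betw_left_partition:
  "finite S \<Longrightarrow> bij_betw left_partition {t. bst t \<and> set_tree t = S} (nc_partitions S)"
  unfolding bij_betw_def inj_on_def
  using left_partition_inject left_partition_in_nc_partitions left_partition_surj by fastforce

lemma left_edges_subset_left_partition: "left_edges t \<subseteq> left_partition t"
proof (induction t)
  case (Node l a r)
  have "(case l of \<langle>\<rangle> \<Rightarrow> {} | \<langle>_, b, _\<rangle> \<Rightarrow> {(a, b)}) \<subseteq> left_spine \<langle>l, a, r\<rangle> \<times> left_spine \<langle>l, a, r\<rangle>"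
    by (cases l) auto
  with Node.IH show ?case
    unfolding left_edges.simps(2) left_partition.simps(2) by blast
qed simp

lemma left_spine_reachable: "x \<in> left_spine \<langle>l, a, r\<rangle> \<Longrightarrow> (a, x) \<in> (left_edges \<langle>l, a, r\<rangle>)\<^sup>*"
proof (induction l arbitrary: a r)
  case (Node ll b lr)
  let ?t = "\<langle>\<langle>ll, b, lr\<rangle>, a, r\<rangle>"
  have "x = a \<or> (b, x) \<in> (left_edges \<langle>ll, b, lr\<rangle>)\<^sup>*"
    using Node by auto
  moreover have "(b, x) \<in> (left_edges ?t)\<^sup>*" if "(b, x) \<in> (left_edges \<langle>ll, b, lr\<rangle>)\<^sup>*"
    using that rtrancl_mono[of "left_edges \<langle>ll, b, lr\<rangle>" "left_edges ?t"] by auto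
  moreover have "(a, b) \<in> left_edges ?t"
    by simp
  ultimately show ?case
    by (blast intro: converse_rtrancl_into_rtrancl)
qed simp

lemma same_branch_sym: "same_branch E x y \<Longrightarrow> same_branch E y x"
  unfolding same_branch_def by (metis converse_Un converse_converse rtrancl_converseI sup_commute)

lemma same_branch_trans: "same_branch E x y \<Longrightarrow> same_branch E y z \<Longrightarrow> same_branch E x z"
  unfolding same_branch_def by (rule rtrancl_trans)

lemma same_branch_mono: "E \<subseteq> F \<Longrightarrow> same_branch E x y \<Longrightarrow> same_branch F x y"
  unfolding same_branch_def using rtrancl_mono[of "E \<union> E\<inverse>" "F \<union> F\<inverse>"] by blast

lemma left_partition_same_branch: "(x, y) \<in> left_partition t \<Longrightarrow> same_branch (left_edges t) x y"
proof (induction t)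
  case (Node l a r)
  have mono: "left_edges l \<subseteq> left_edges \<langle>l, a, r\<rangle>" "left_edges r \<subseteq> left_edges \<langle>l, a, r\<rangle>"
    by auto
  have "same_branch (left_edges \<langle>l, a, r\<rangle>) a z" if "z \<in> left_spine \<langle>l, a, r\<rangle>" for z
    using left_spine_reachable[OF that] rtrancl_mono[of _ "left_edges \<langle>l, a, r\<rangle> \<union> _"]
    unfolding same_branch_def by blast
  then have "same_branch (left_edges \<langle>l, a, r\<rangle>) x y"
    if "x \<in> left_spine \<langle>l, a, r\<rangle>" "y \<in> left_spine \<langle>l, a, r\<rangle>"
    using that by (blast intro: same_branch_trans same_branch_sym)
  moreover have "same_branch (left_edges \<langle>l, a, r\<rangle>) x y"
    if "(x, y) \<in> left_partition l \<or> (x, y) \<in> left_partition r"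
    using that Node.IH mono by (blast intro: same_branch_mono)
  ultimately show ?case
    using Node.prems unfolding left_partition.simps(2) by blast
qed simp

lemma same_branch_left_edges_iff:
  assumes "bst t" "x \<in> set_tree t" "y \<in> set_tree t"
  shows "same_branch (left_edges t) x y \<longleftrightarrow> (x, y) \<in> left_partition t"
proof
  have "equiv (set_tree t) (left_partition t)"
    using left_partition_in_nc_partitions[OF assms(1)] by (simp add: nc_partitions_def)
  then have "left_edges t \<union> (left_edges t)\<inverse> \<subseteq> left_partition t" "trans (left_partition t)"
    using left_edges_subset_left_partition by (blast elim: equivE dest: symD)+
  then have "(left_edges t \<union> (left_edges t)\<inverse>)\<^sup>* \<subseteq> (left_partition t)\<^sup>="
    by (metis rtrancl_mono rtrancl_trancl_reflcl trancl_id)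
  moreover have "(x, x) \<in> left_partition t"
    using \<open>equiv (set_tree t) (left_partition t)\<close> assms(2) by (blast elim: equivE dest: refl_onD)
  moreover assume "same_branch (left_edges t) x y"
  ultimately show "(x, y) \<in> left_partition t"
    unfolding same_branch_def by blast
qed (rule left_partition_same_branch)

lemma same_branch_map_prod_image:
  "same_branch E x y \<Longrightarrow> same_branch (map_prod g g ` E) (g x) (g y)"
  unfolding same_branch_def
proof (induction rule: rtrancl_induct)
  case (step y z)
  then have "(g y, g z) \<in> map_prod g g ` E \<union> (map_prod g g ` E)\<inverse>"
    by auto
  with step.IH show ?case
    by (rule rtrancl_into_rtrancl)
qed simp

lemma left_edges_mirror: "left_edges (mirror t) = right_edges t"
proof (induction t)
  case (Node l a r)
  then show ?case
    by (cases r) auto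
qed simp

lemma left_edges_map_tree: "left_edges (map_tree g t) = map_prod g g ` left_edges t"
proof (induction t)
  case (Node l a r)
  then show ?case
    by (cases l) auto
qed simp

lemma set_tree_mirror: "set_tree (mirror t) = set_tree t"
  by (metis set_inorder inorder_mirror set_rev)

text \<open>The right branches of \<open>t\<close> are the left branches of its mirror image, which is a search
  tree for the reversed order.\<close>

definition dual_tree :: "'a tree \<Rightarrow> 'a dual tree" where
  "dual_tree t = map_tree dual (mirror t)"

lemma set_tree_dual_tree: "set_tree (dual_tree t) = dual ` set_tree t"
  by (simp add: dual_tree_def tree.set_map set_tree_mirror)

lemma bst_dual_tree: "bst (dual_tree t) \<longleftrightarrow> bst t"
  by (induction t) (auto simp: dual_tree_def tree.set_map set_tree_mirror)

lemma left_edges_dual_tree: "left_edges (dual_tree t) = map_prod dual dual ` right_edges t"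
  by (simp add: dual_tree_def left_edges_map_tree left_edges_mirror)

lemma dual_tree_inverse: "dual_tree (mirror (map_tree undual t)) = t"
  by (simp add: dual_tree_def tree.map_comp tree.map_id)

lemma bij_betw_dual_tree:
  "bij_betw dual_tree {t. bst t \<and> set_tree t = S} {t. bst t \<and> set_tree t = dual ` S}"
proof (rule bij_betw_byWitness[where f' = "\<lambda>t. mirror (map_tree undual t)"])
  show "\<forall>t\<in>{t. bst t \<and> set_tree t = S}. mirror (map_tree undual (dual_tree t)) = t"
    by (simp add: dual_tree_def tree.map_comp tree.map_id)
  show "\<forall>t\<in>{t. bst t \<and> set_tree t = dual ` S}. dual_tree (mirror (map_tree undual t)) = t"
    by (simp add: dual_tree_inverse)
  show "dual_tree ` {t. bst t \<and> set_tree t = S} \<subseteq> {t. bst t \<and> set_tree t = dual ` S}"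
    by (auto simp: bst_dual_tree set_tree_dual_tree)
  show "(\<lambda>t. mirror (map_tree undual t)) ` {t. bst t \<and> set_tree t = dual ` S} \<subseteq> {t. bst t \<and> set_tree t = S}"
  proof
    fix u assume "u \<in> (\<lambda>t. mirror (map_tree undual t)) ` {t. bst t \<and> set_tree t = dual ` S}"
    then obtain t where "bst t" "set_tree t = dual ` S" and u: "u = mirror (map_tree undual t)"
      by blast
    then have "bst (dual_tree u)" "set_tree (dual_tree u) = dual ` S"
      by (simp_all add: dual_tree_inverse)
    then show "u \<in> {t. bst t \<and> set_tree t = S}"
      by (simp add: bst_dual_tree set_tree_dual_tree inj_image_eq_iff[OF inj_dual])
  qed
qed

definition right_partition :: "'a::linorder tree \<Rightarrow> ('a \<times> 'a) set" where
  "right_partition t = map_prod undual undual ` left_partition (dual_tree t)"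

lemma mem_map_prod_undual_iff: "(x, y) \<in> map_prod undual undual ` P \<longleftrightarrow> (dual x, dual y) \<in> P"
  by (auto intro: rev_image_eqI)

lemma same_branch_right_edges_iff:
  assumes "bst t" "x \<in> set_tree t" "y \<in> set_tree t"
  shows "same_branch (right_edges t) x y \<longleftrightarrow> (x, y) \<in> right_partition t"
proof -
  have t: "bst (dual_tree t)" "dual x \<in> set_tree (dual_tree t)" "dual y \<in> set_tree (dual_tree t)"
    using assms by (simp_all add: bst_dual_tree set_tree_dual_tree)
  have "map_prod undual undual ` left_edges (dual_tree t) = right_edges t"
    unfolding left_edges_dual_tree image_comp by (simp add: prod.map_comp map_prod.id)
  then have "same_branch (right_edges t) x y \<longleftrightarrow> same_branch (left_edges (dual_tree t)) (dual x) (dual y)"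
    using same_branch_map_prod_image[of "right_edges t" x y dual]
      same_branch_map_prod_image[of "left_edges (dual_tree t)" "dual x" "dual y" undual]
    unfolding left_edges_dual_tree by auto
  also have "\<dots> \<longleftrightarrow> (x, y) \<in> right_partition t"
    using same_branch_left_edges_iff[OF t] by (simp add: right_partition_def mem_map_prod_undual_iff)
  finally show ?thesis .
qed

lemma bij_betw_right_partition:
  assumes "finite S"
  shows "bij_betw right_partition {t. bst t \<and> set_tree t = S} (nc_partitions S)"
proof -
  have "bij_betw (image (map_prod undual undual)) (nc_partitions (dual ` S)) (nc_partitions S)"
  proof (rule bij_betw_byWitness[where f' = "image (map_prod dual dual)"])
    show "\<forall>P\<in>nc_partitions (dual ` S). map_prod dual dual ` map_prod undual undual ` P = P"
      "\<forall>P\<in>nc_partitions S. map_prod undual undual ` map_prod dual dual ` P = P"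
      by (simp_all add: image_comp prod.map_comp map_prod.id)
    show "image (map_prod undual undual) ` nc_partitions (dual ` S) \<subseteq> nc_partitions S"
      using nc_partitions_map_prod_antimono[OF _ inj_undual, of _ "dual ` S"]
      by (auto simp: dual_less_iff image_comp)
    show "image (map_prod dual dual) ` nc_partitions S \<subseteq> nc_partitions (dual ` S)"
      using nc_partitions_map_prod_antimono[OF _ inj_dual, of _ S] by auto
  qed
  moreover have "bij_betw left_partition {t. bst t \<and> set_tree t = dual ` S} (nc_partitions (dual ` S))"
    using assms by (simp add: bij_betw_left_partition)
  ultimately have "bij_betw (image (map_prod undual undual) \<circ> left_partition \<circ> dual_tree)
      {t. bst t \<and> set_tree t = S} (nc_partitions S)"
    using bij_betw_dual_tree by (blast intro: bij_betw_trans)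
  then show ?thesis
    by (simp add: comp_def right_partition_def[abs_def])
qed

definition partition_rgs :: "nat \<Rightarrow> (nat \<times> nat) set \<Rightarrow> nat list" where
  "partition_rgs n P = rgs_of n (\<lambda>i j. (i, j) \<in> P)"

definition class_rank :: "nat \<Rightarrow> (nat \<times> nat) set \<Rightarrow> nat \<Rightarrow> nat" where
  "class_rank n P i = card {m \<in> (\<lambda>j. Min (P `` {j})) ` {1..n}. m \<le> Min (P `` {i})}"

lemma length_partition_rgs: "length (partition_rgs n P) = n"
  by (simp add: partition_rgs_def rgs_of_def)

context
  fixes n :: nat and P :: "(nat \<times> nat) set"
  assumes P: "equiv {1..n} P"
begin

lemma partition_rgs_nth: "p < n \<Longrightarrow> partition_rgs n P ! p = class_rank n P (Suc p)"
proof -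
  have "block n (\<lambda>i j. (i, j) \<in> P) i = P `` {i}" for i
    using equiv_type[OF P] by (auto simp: block_def)
  moreover assume "p < n"
  ultimately show ?thesis
    by (simp add: partition_rgs_def rgs_of_def class_rank_def image_image del: upt_Suc)
qed

private abbreviation (input) "cmin i \<equiv> Min (P `` {i})"

private lemma cmin: "i \<in> {1..n} \<Longrightarrow> (i, cmin i) \<in> P \<and> cmin i \<le> i"
proof -
  assume i: "i \<in> {1..n}"
  have "finite (P `` {i})" "i \<in> P `` {i}"
    using P i equiv_type[OF P] by (auto elim!: equivE dest: refl_onD intro: finite_subset)
  then show ?thesis
    using Min_in Min_le by blast
qed

private lemma cmin_eq: "(i, j) \<in> P \<Longrightarrow> cmin i = cmin j"
  using P by (metis equiv_class_eq_iff)

private lemma cmin_eq_iff: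
  assumes "i \<in> {1..n}" "j \<in> {1..n}"
  shows "cmin i = cmin j \<longleftrightarrow> (i, j) \<in> P"
proof
  assume "cmin i = cmin j"
  then show "(i, j) \<in> P"
    using cmin[OF assms(1)] cmin[OF assms(2)] P by (metis equivE symD transD)
qed (rule cmin_eq)

private lemma class_rank_mono:
  assumes "j \<in> {1..n}" "cmin i < cmin j"
  shows "class_rank n P i < class_rank n P j"
proof -
  let ?mins = "(\<lambda>j. cmin j) ` {1..n}"
  have "{m \<in> ?mins. m \<le> cmin i} \<subset> {m \<in> ?mins. m \<le> cmin j}"
    using assms by force
  then show ?thesis
    unfolding class_rank_def by (intro psubset_card_mono) auto
qed

lemma class_rank_eq_iff:
  assumes "i \<in> {1..n}" "j \<in> {1..n}"
  shows "class_rank n P i = class_rank n P j \<longleftrightarrow> (i, j) \<in> P"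
proof -
  have "class_rank n P i = class_rank n P j \<longleftrightarrow> cmin i = cmin j"
  proof (cases rule: linorder_cases[of "cmin i" "cmin j"])
    case less
    then show ?thesis using class_rank_mono[OF assms(2)] by fastforce
  next
    case greater
    then show ?thesis using class_rank_mono[OF assms(1)] by fastforce
  qed (simp add: class_rank_def)
  then show ?thesis
    using cmin_eq_iff[OF assms] by simp
qed

lemma class_rank_pos: "i \<in> {1..n} \<Longrightarrow> 1 \<le> class_rank n P i"
proof -
  assume "i \<in> {1..n}"
  then have "cmin i \<in> {m \<in> (\<lambda>j. cmin j) ` {1..n}. m \<le> cmin i}"
    by auto
  moreover have "finite {m \<in> (\<lambda>j. cmin j) ` {1..n}. m \<le> cmin i}"
    by simp
  ultimately have "0 < card {m \<in> (\<lambda>j. cmin j) ` {1..n}. m \<le> cmin i}"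
    using card_gt_0_iff by blast
  then show ?thesis
    unfolding class_rank_def by simp
qed

lemma class_rank_le: "i \<in> {1..n} \<Longrightarrow> class_rank n P i \<le> Suc (Max (insert 0 (class_rank n P ` {1..<i})))"
proof -
  assume i: "i \<in> {1..n}"
  let ?mins = "(\<lambda>j. cmin j) ` {1..n}"
  let ?L = "{m \<in> ?mins. m < i}"
  have "{m \<in> ?mins. m \<le> cmin i} \<subseteq> insert (cmin i) ?L"
    using cmin[OF i] by auto
  then have "class_rank n P i \<le> card (insert (cmin i) ?L)"
    unfolding class_rank_def by (intro card_mono) auto
  also have "\<dots> \<le> Suc (card ?L)"
    by (simp add: card_insert_if)
  finally have "class_rank n P i \<le> Suc (card ?L)" .
  moreover have "card ?L \<le> Max (insert 0 (class_rank n P ` {1..<i}))"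
  proof (cases "?L = {}")
    case False
    define m where "m = Max ?L"
    have "m \<in> ?L"
      using False unfolding m_def by (intro Max_in) auto
    then obtain j where j: "j \<in> {1..n}" "m = cmin j" "m < i"
      by blast
    have "(j, m) \<in> P"
      using cmin[OF j(1)] j(2) by simp
    then have m: "m \<in> {1..n}" "cmin m = m"
      using equiv_type[OF P] cmin_eq[of j m] j(2) by auto
    have "?L \<subseteq> {m' \<in> ?mins. m' \<le> cmin m}"
      using m unfolding m_def by auto
    then have "card ?L \<le> class_rank n P m"
      unfolding class_rank_def by (intro card_mono) auto
    also have "\<dots> \<le> Max (insert 0 (class_rank n P ` {1..<i}))"
      using m \<open>m < i\<close> by (intro Max_ge) auto
    finally show ?thesis .
  qed simp
  ultimately show ?thesis
    by simp
qed

lemma partition_rgs_nth_eq_iff: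
  "p < n \<Longrightarrow> q < n \<Longrightarrow> partition_rgs n P ! p = partition_rgs n P ! q \<longleftrightarrow> (Suc p, Suc q) \<in> P"
  by (simp add: partition_rgs_nth class_rank_eq_iff)

lemma partition_rgs_in_RGS: "partition_rgs n P \<in> RGS n"
  unfolding RGS_def is_rgs_def
proof (intro CollectI conjI allI impI)
  fix p assume "p < length (partition_rgs n P)"
  then have "p < n" "Suc p \<in> {1..n}"
    by (simp_all add: length_partition_rgs)
  have "set (take p (partition_rgs n P)) = (\<lambda>q. partition_rgs n P ! q) ` {0..<p}"
    using \<open>p < n\<close> by (simp add: nth_image length_partition_rgs)
  also have "\<dots> = (\<lambda>q. class_rank n P (Suc q)) ` {0..<p}"
    using \<open>p < n\<close> by (intro image_cong) (simp_all add: partition_rgs_nth)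
  also have "\<dots> = class_rank n P ` {1..<Suc p}"
    by (simp add: image_image[symmetric, of _ Suc] image_Suc_atLeastLessThan)
  finally show "partition_rgs n P ! p \<le> Suc (Max (insert 0 (set (take p (partition_rgs n P)))))"
    using class_rank_le[OF \<open>Suc p \<in> {1..n}\<close>] \<open>p < n\<close> by (simp add: partition_rgs_nth)
  show "1 \<le> partition_rgs n P ! p"
    using class_rank_pos[OF \<open>Suc p \<in> {1..n}\<close>] \<open>p < n\<close> by (simp add: partition_rgs_nth)
qed (rule length_partition_rgs)

end

lemma rgs_set_take:
  assumes "is_rgs x" "k \<le> length x"
  shows "set (take k x) = {1..Max (insert 0 (set (take k x)))}"
  using assms(2)
proof (induction k)
  case (Suc k)
  let ?M = "Max (insert 0 (set (take k x)))"
  have "1 \<le> x ! k" "x ! k \<le> Suc ?M"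
    using assms(1) Suc.prems unfolding is_rgs_def by auto
  moreover have "set (take (Suc k) x) = insert (x ! k) {1..?M}"
    using Suc by (simp add: take_Suc_conv_app_nth)
  moreover have "insert c {1..M} = {1..max M c}" if "1 \<le> c" "c \<le> Suc M" for c M :: nat
    using that by (auto simp: max_def)
  ultimately have "set (take (Suc k) x) = {1..max ?M (x ! k)}"
    by presburger
  moreover have "Max (insert 0 {1..max ?M (x ! k)}) = max ?M (x ! k)"
    by (rule Max_eqI) auto
  ultimately show ?case
    by simp
qed simp

lemma rgs_fresh_value:
  assumes "is_rgs x" "p < length x" "x ! p \<notin> set (take p x)"
  shows "x ! p = Suc (Max (insert 0 (set (take p x))))"
proof -
  have "1 \<le> x ! p" "x ! p \<le> Suc (Max (insert 0 (set (take p x))))"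
    using assms(1,2) unfolding is_rgs_def by auto
  then show ?thesis
    using assms(3) rgs_set_take[OF assms(1), of p] assms(2) by fastforce
qed

lemma rgs_smaller_value_earlier:
  assumes "is_rgs x" "p < length x" "1 \<le> u" "u < x ! p"
  shows "\<exists>q<p. x ! q = u"
proof -
  have "x ! p \<le> Suc (Max (insert 0 (set (take p x))))"
    using assms(1,2) unfolding is_rgs_def by auto
  then have "u \<in> set (take p x)"
    using assms(3,4) rgs_set_take[OF assms(1), of p] assms(2) by fastforce
  then show ?thesis
    by (auto simp: in_set_conv_nth)
qed

lemma rgs_eqI:
  assumes x: "is_rgs x" and y: "is_rgs y" and len: "length x = length y"
    and pattern: "\<And>p q. p < length x \<Longrightarrow> q < length x \<Longrightarrow> x ! p = x ! q \<longleftrightarrow> y ! p = y ! q"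
  shows "x = y"
proof -
  have "take p x = take p y" if "p \<le> length x" for p
    using that
  proof (induction p)
    case (Suc p)
    then have "p < length x" "take p x = take p y"
      by simp_all
    have "x ! p = y ! p"
    proof (cases "x ! p \<in> set (take p x)")
      case True
      then obtain q where "q < p" "x ! q = x ! p"
        by (auto simp: in_set_conv_nth)
      moreover have "x ! q = y ! q"
        using \<open>take p x = take p y\<close> \<open>q < p\<close> by (metis nth_take)
      moreover have "y ! q = y ! p"
        using pattern[of q p] \<open>q < p\<close> \<open>p < length x\<close> \<open>x ! q = x ! p\<close> by simp
      ultimately show ?thesis
        by simp
    next
      case False
      then have "y ! p \<notin> set (take p y)"
        using pattern \<open>p < length x\<close> len by (auto simp: in_set_conv_nth)
      then show ?thesis
        using rgs_fresh_value[OF x \<open>p < length x\<close> False] rgs_fresh_value[OF y _] \<open>p < length x\<close> len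
          \<open>take p x = take p y\<close> by simp
    qed
    then show ?case
      using \<open>p < length x\<close> len \<open>take p x = take p y\<close> by (simp add: take_Suc_conv_app_nth)
  qed simp
  then show ?thesis
    using len by (metis order_refl take_all)
qed

lemma contains_1212_iff:
  "contains x [1, 2, 1, 2] \<longleftrightarrow>
     (\<exists>p\<^sub>0 p\<^sub>1 p\<^sub>2 p\<^sub>3. p\<^sub>0 < p\<^sub>1 \<and> p\<^sub>1 < p\<^sub>2 \<and> p\<^sub>2 < p\<^sub>3 \<and> p\<^sub>3 < length x \<and>
        x ! p\<^sub>0 = x ! p\<^sub>2 \<and> x ! p\<^sub>1 = x ! p\<^sub>3 \<and> x ! p\<^sub>0 < x ! p\<^sub>1)"
  (is "?lhs \<longleftrightarrow> ?rhs")
proof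
  assume ?lhs
  moreover have "length [1, 2, 1, 2::nat] = 4"
    by simp
  ultimately obtain f :: "nat \<Rightarrow> nat" where f: "\<forall>a b. a < b \<and> b < 4 \<longrightarrow> f a < f b" "\<forall>a<4. f a < length x"
    and pat: "\<forall>a<4. \<forall>b<4. (x ! f a < x ! f b \<longleftrightarrow> [1, 2, 1, 2::nat] ! a < [1, 2, 1, 2] ! b) \<and>
                           (x ! f a = x ! f b \<longleftrightarrow> [1, 2, 1, 2::nat] ! a = [1, 2, 1, 2] ! b)"
    unfolding contains_def \<open>length [1, 2, 1, 2::nat] = 4\<close> by blast
  have "x ! f 0 = x ! f 2" "x ! f 1 = x ! f 3" "x ! f 0 < x ! f 1"
    using pat[rule_format, of 0 2] pat[rule_format, of 1 3] pat[rule_format, of 0 1] by simp_all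
  moreover have "f 0 < f 1" "f 1 < f 2" "f 2 < f 3" "f 3 < length x"
    using f by simp_all
  ultimately show ?rhs
    by blast
next
  assume ?rhs
  then obtain p\<^sub>0 p\<^sub>1 p\<^sub>2 p\<^sub>3 where p: "p\<^sub>0 < p\<^sub>1" "p\<^sub>1 < p\<^sub>2" "p\<^sub>2 < p\<^sub>3" "p\<^sub>3 < length x"
    "x ! p\<^sub>0 = x ! p\<^sub>2" "x ! p\<^sub>1 = x ! p\<^sub>3" "x ! p\<^sub>0 < x ! p\<^sub>1"
    by blast
  define f where "f a = [p\<^sub>0, p\<^sub>1, p\<^sub>2, p\<^sub>3] ! a" for a
  have four: "a < length [1, 2, 1, 2::nat] \<Longrightarrow> a = 0 \<or> a = 1 \<or> a = 2 \<or> a = 3" for a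
    by auto
  have "f a < f b" if "a < b" "b < length [1, 2, 1, 2::nat]" for a b
    using four[of a] four[of b] that p by (auto simp: f_def)
  moreover have "f a < length x" if "a < length [1, 2, 1, 2::nat]" for a
    using four[OF that] p by (auto simp: f_def)
  moreover have "(x ! f a < x ! f b \<longleftrightarrow> [1, 2, 1, 2::nat] ! a < [1, 2, 1, 2] ! b) \<and>
      (x ! f a = x ! f b \<longleftrightarrow> [1, 2, 1, 2::nat] ! a = [1, 2, 1, 2] ! b)"
    if "a < length [1, 2, 1, 2::nat]" "b < length [1, 2, 1, 2::nat]" for a b
    using four[OF that(1)] four[OF that(2)] p by (auto simp: f_def)
  ultimately show ?lhs
    unfolding contains_def by blast
qed

definition rgs_kernel :: "nat list \<Rightarrow> (nat \<times> nat) set" where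
  "rgs_kernel x = {(i, j). i \<in> {1..length x} \<and> j \<in> {1..length x} \<and> x ! (i - 1) = x ! (j - 1)}"

lemma equiv_rgs_kernel: "equiv {1..length x} (rgs_kernel x)"
  by (auto simp: rgs_kernel_def equiv_def refl_on_def sym_def trans_def)

lemma avoids_1212_if_noncrossing_rgs_kernel:
  assumes "noncrossing (rgs_kernel x)"
  shows "\<not> contains x [1, 2, 1, 2]"
proof
  assume "contains x [1, 2, 1, 2]"
  then obtain p\<^sub>0 p\<^sub>1 p\<^sub>2 p\<^sub>3 where "p\<^sub>0 < p\<^sub>1" "p\<^sub>1 < p\<^sub>2" "p\<^sub>2 < p\<^sub>3" "p\<^sub>3 < length x"
    "x ! p\<^sub>0 = x ! p\<^sub>2" "x ! p\<^sub>1 = x ! p\<^sub>3" "x ! p\<^sub>0 < x ! p\<^sub>1"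
    unfolding contains_1212_iff by blast
  then have "(Suc p\<^sub>0, Suc p\<^sub>2) \<in> rgs_kernel x" "(Suc p\<^sub>1, Suc p\<^sub>3) \<in> rgs_kernel x"
    "(Suc p\<^sub>0, Suc p\<^sub>1) \<notin> rgs_kernel x"
    by (simp_all add: rgs_kernel_def)
  then show False
    using assms \<open>p\<^sub>0 < p\<^sub>1\<close> \<open>p\<^sub>1 < p\<^sub>2\<close> \<open>p\<^sub>2 < p\<^sub>3\<close> unfolding noncrossing_def by blast
qed

lemma noncrossing_rgs_kernel_if_avoids_1212:
  assumes "is_rgs x" and avoid: "\<not> contains x [1, 2, 1, 2]"
  shows "noncrossing (rgs_kernel x)"
  unfolding noncrossing_def
proof (intro allI impI)
  fix a b c d
  assume "a < b" "b < c" "c < d" "(a, c) \<in> rgs_kernel x" "(b, d) \<in> rgs_kernel x"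
  then have ord: "a - 1 < b - 1" "b - 1 < c - 1" "c - 1 < d - 1" "d - 1 < length x"
    and eq: "x ! (a - 1) = x ! (c - 1)" "x ! (b - 1) = x ! (d - 1)"
    by (auto simp: rgs_kernel_def)
  have "\<not> x ! (a - 1) < x ! (b - 1)"
    using avoid ord eq unfolding contains_1212_iff by blast
  moreover have "\<not> x ! (b - 1) < x ! (a - 1)"
  proof
    assume less: "x ! (b - 1) < x ! (a - 1)"
    have "1 \<le> x ! (b - 1)"
      using assms(1) ord unfolding is_rgs_def by auto
    then obtain q where "q < a - 1" "x ! q = x ! (b - 1)"
      using rgs_smaller_value_earlier[OF assms(1) _ _ less] ord by auto
    moreover have "c - 1 < length x" "x ! q < x ! (a - 1)"
      using ord less \<open>x ! q = x ! (b - 1)\<close> by simp_all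
    ultimately show False
      using avoid ord(1,2) eq(1) unfolding contains_1212_iff by blast
  qed
  ultimately show "(a, b) \<in> rgs_kernel x"
    using \<open>(a, c) \<in> rgs_kernel x\<close> \<open>(b, d) \<in> rgs_kernel x\<close> by (auto simp: rgs_kernel_def)
qed

lemma rgs_kernel_partition_rgs:
  assumes "equiv {1..n} P"
  shows "rgs_kernel (partition_rgs n P) = P"
proof -
  have "(i, j) \<in> rgs_kernel (partition_rgs n P) \<longleftrightarrow> (i, j) \<in> P" for i j
  proof (cases "i \<in> {1..n} \<and> j \<in> {1..n}")
    case True
    then have "i - 1 < n" "j - 1 < n"
      by auto
    from partition_rgs_nth_eq_iff[OF assms this] True show ?thesis
      by (simp add: rgs_kernel_def length_partition_rgs)
  next
    case False
    then show ?thesis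
      using equiv_type[OF assms] by (auto simp: rgs_kernel_def length_partition_rgs)
  qed
  then show ?thesis
    by auto
qed

lemma partition_rgs_rgs_kernel:
  assumes "x \<in> RGS n"
  shows "partition_rgs n (rgs_kernel x) = x"
proof (rule rgs_eqI)
  have "equiv {1..n} (rgs_kernel x)"
    using assms equiv_rgs_kernel[of x] by (simp add: RGS_def)
  then show "is_rgs (partition_rgs n (rgs_kernel x))"
    "length (partition_rgs n (rgs_kernel x)) = length x"
    "\<And>p q. p < length (partition_rgs n (rgs_kernel x)) \<Longrightarrow> q < length (partition_rgs n (rgs_kernel x)) \<Longrightarrow>
       partition_rgs n (rgs_kernel x) ! p = partition_rgs n (rgs_kernel x) ! q \<longleftrightarrow> x ! p = x ! q"
    using assms partition_rgs_in_RGS partition_rgs_nth_eq_iff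
    by (auto simp: RGS_def rgs_kernel_def length_partition_rgs)
  show "is_rgs x"
    using assms by (simp add: RGS_def)
qed

lemma bij_betw_partition_rgs:
  "bij_betw (partition_rgs n) (nc_partitions {1..n}) (RGS_avoid n [1, 2, 1, 2])"
proof (rule bij_betw_byWitness[where f' = rgs_kernel])
  show "\<forall>P\<in>nc_partitions {1..n}. rgs_kernel (partition_rgs n P) = P"
    using rgs_kernel_partition_rgs by (simp add: nc_partitions_def)
  show "\<forall>x\<in>RGS_avoid n [1, 2, 1, 2]. partition_rgs n (rgs_kernel x) = x"
    using partition_rgs_rgs_kernel by (simp add: RGS_avoid_def)
  show "partition_rgs n ` nc_partitions {1..n} \<subseteq> RGS_avoid n [1, 2, 1, 2]"
    using partition_rgs_in_RGS rgs_kernel_partition_rgs avoids_1212_if_noncrossing_rgs_kernel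
    by (fastforce simp: nc_partitions_def RGS_avoid_def)
  show "rgs_kernel ` RGS_avoid n [1, 2, 1, 2] \<subseteq> nc_partitions {1..n}"
    using equiv_rgs_kernel noncrossing_rgs_kernel_if_avoids_1212
    by (auto simp: RGS_avoid_def RGS_def nc_partitions_def)
qed

lemma rgs_of_cong:
  assumes "\<And>i j. i \<in> {1..n} \<Longrightarrow> j \<in> {1..n} \<Longrightarrow> R i j = R' i j"
  shows "rgs_of n R = rgs_of n R'"
proof -
  have "block n R i = block n R' i" if "i \<in> {1..n}" for i
    using assms that by (auto simp: block_def)
  then show ?thesis
    unfolding rgs_of_def by (intro map_cong image_cong arg_cong[where f = card]) auto
qed

lemma phiL_eq: "t \<in> trees n \<Longrightarrow> phiL n t = partition_rgs n (left_partition t)"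
  unfolding phiL_def partition_rgs_def trees_def
  by (rule rgs_of_cong) (simp add: same_branch_left_edges_iff)

lemma phiR_eq: "t \<in> trees n \<Longrightarrow> phiR n t = partition_rgs n (right_partition t)"
  unfolding phiR_def partition_rgs_def trees_def
  by (rule rgs_of_cong) (simp add: same_branch_right_edges_iff)

theorem lemma14:
  fixes n :: nat
  shows "bij_betw (phiL n) (trees n) (RGS_avoid n [1,2,1,2]) \<and>
         bij_betw (phiR n) (trees n) (RGS_avoid n [1,2,1,2])"
proof
  have "bij_betw (partition_rgs n \<circ> left_partition) (trees n) (RGS_avoid n [1, 2, 1, 2])"
    unfolding trees_def using bij_betw_left_partition bij_betw_partition_rgs
    by (blast intro: bij_betw_trans finite_atLeastAtMost)
  then show "bij_betw (phiL n) (trees n) (RGS_avoid n [1,2,1,2])"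
    by (rule bij_betw_cong[THEN iffD1, rotated]) (simp add: phiL_eq)
  have "bij_betw (partition_rgs n \<circ> right_partition) (trees n) (RGS_avoid n [1, 2, 1, 2])"
    unfolding trees_def using bij_betw_right_partition bij_betw_partition_rgs
    by (blast intro: bij_betw_trans finite_atLeastAtMost)
  then show "bij_betw (phiR n) (trees n) (RGS_avoid n [1,2,1,2])"
    by (rule bij_betw_cong[THEN iffD1, rotated]) (simp add: phiR_eq)
qed

end
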